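(* Let $\Gamma=\langle V,(w_u)_{u\in V},\alpha,\beta\rangle$ be a celebrity game with $\beta>1$, $n=|V|$, $W=\sum_{u\in V}w_u$, $w_{\max}=\max_{u}w_u$, and suppose $\alpha\ge w_{\max}$. If there is more than one vertex $u\in V$ with $\alpha>W-w_u$, then the edgeless graph $I_n$ is the unique Nash equilibrium graph of $\Gamma$; otherwise a star graph $S_n$ on $V$ (a tree with one vertex adjacent to all others) is a Nash equilibrium graph of $\Gamma$.
   Context: A celebrity game $\Gamma=\langle V,(w_u)_{u\in V},\alpha,\beta\rangle$ consists of a set of players $V=\{1,\dots,n\}$, celebrity weights $w_u>0$, a link cost $\alpha>0$ and a critical distance $\beta$ with $1\le\beta\le n-1$. A strategy of player $u$ is a set $S_u\subseteq V\setminus\{u\}$; a strategy profile is $S=(S_1,\dots,S_n)$; its outcome graph $G[S]$ is the undirected graph on $V$ with edge set $\{\{u,v\}: u\in S_v\text{ or }v\in S_u\}$. With $d_G$ the graph distance (infinite between different connected components), the cost of player $u$ is $c_u(S)=\alpha|S_u|+\sum_{v:\,d_{G[S]}(u,v)>\beta}w_v$. $S$ is a Nash equilibrium if no player can strictly decrease its cost by changing only its own strategy; a graph $G$ is a Nash equilibrium graph of $\Gamma$ if $G=G[S]$ for some Nash equilibrium $S$. *)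

theory Defs
  imports Main "HOL-Library.Extended_Nat"
begin

text \<open>A graph on V is given by its edge set,
  a set of two-element vertex sets. Strategy profiles are functions S :: nat => nat set;
  only the values S u for u in V matter.\<close>

definition players :: "nat \<Rightarrow> nat set" where
  "players n = {1..n}"

definition celebrity_game :: "nat \<Rightarrow> (nat \<Rightarrow> real) \<Rightarrow> real \<Rightarrow> nat \<Rightarrow> bool" where
  "celebrity_game n w \<alpha> \<beta> \<longleftrightarrow>
     (\<forall>u\<in>players n. w u > 0) \<and> \<alpha> > 0 \<and> 1 \<le> \<beta> \<and> \<beta> \<le> n - 1"

definition valid_profile :: "nat \<Rightarrow> (nat \<Rightarrow> nat set) \<Rightarrow> bool" where
  "valid_profile n S \<longleftrightarrow> (\<forall>u\<in>players n. S u \<subseteq> players n - {u})"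

definition outcome_graph :: "nat \<Rightarrow> (nat \<Rightarrow> nat set) \<Rightarrow> nat set set" where
  "outcome_graph n S =
     {{u, v} | u v. u \<in> players n \<and> v \<in> players n \<and> (u \<in> S v \<or> v \<in> S u)}"

definition is_walk :: "nat set set \<Rightarrow> nat list \<Rightarrow> bool" where
  "is_walk E xs \<longleftrightarrow> xs \<noteq> [] \<and> (\<forall>i. Suc i < length xs \<longrightarrow> {xs ! i, xs ! Suc i} \<in> E)"

text \<open>Graph distance, infinite between different components.\<close>
definition graph_dist :: "nat set set \<Rightarrow> nat \<Rightarrow> nat \<Rightarrow> enat" where
  "graph_dist E u v =
     (INF xs \<in> {xs. is_walk E xs \<and> hd xs = u \<and> last xs = v}. enat (length xs - 1))"

definition player_cost ::
  "nat \<Rightarrow> (nat \<Rightarrow> real) \<Rightarrow> real \<Rightarrow> nat \<Rightarrow> (nat \<Rightarrow> nat set) \<Rightarrow> nat \<Rightarrow> real" where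
  "player_cost n w \<alpha> \<beta> S u =
     \<alpha> * real (card (S u)) +
     (\<Sum>v \<in> {v \<in> players n. graph_dist (outcome_graph n S) u v > enat \<beta>}. w v)"

definition nash_equilibrium ::
  "nat \<Rightarrow> (nat \<Rightarrow> real) \<Rightarrow> real \<Rightarrow> nat \<Rightarrow> (nat \<Rightarrow> nat set) \<Rightarrow> bool" where
  "nash_equilibrium n w \<alpha> \<beta> S \<longleftrightarrow> valid_profile n S \<and>
     (\<forall>u \<in> players n. \<forall>T. T \<subseteq> players n - {u} \<longrightarrow>
        player_cost n w \<alpha> \<beta> S u \<le> player_cost n w \<alpha> \<beta> (S(u := T)) u)"

definition NE_graph :: "nat \<Rightarrow> (nat \<Rightarrow> real) \<Rightarrow> real \<Rightarrow> nat \<Rightarrow> nat set set \<Rightarrow> bool" where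
  "NE_graph n w \<alpha> \<beta> G \<longleftrightarrow> (\<exists>S. nash_equilibrium n w \<alpha> \<beta> S \<and> G = outcome_graph n S)"

definition edgeless_graph :: "nat set set" where
  "edgeless_graph = {}"

definition is_star_graph :: "nat \<Rightarrow> nat set set \<Rightarrow> bool" where
  "is_star_graph n G \<longleftrightarrow> (\<exists>c \<in> players n. G = {{c, v} | v. v \<in> players n \<and> v \<noteq> c})"

end

theory Submission
  imports Defs
begin

text \<open>Call a player u expensive if \<open>\<alpha> > W - w u\<close>: buying even one link costs u more than
  staying isolated, which costs at most \<open>W - w u\<close>. Since \<open>\<alpha> \<ge> max w\<close>, no player gains
  by linking from the empty profile, so the edgeless graph is always an equilibrium. With two
  expensive players \<open>u\<^sub>1, u\<^sub>2\<close>, every equilibrium player buys at most one link (two links cost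
  \<open>2\<alpha> > 2W - w u\<^sub>1 - w u\<^sub>2 \<ge> W\<close>), expensive players buy none, and any player who buys a link
  must be within distance \<open>\<beta>\<close> of every expensive player. Thus the graph is the functional graph
  of a map whose fixed points include \<open>u\<^sub>1, u\<^sub>2\<close>; a connected component of a functional graph
  has at most one fixed point, so no link can be bought at all. With at most one expensive
  player c, the star centred at c has diameter 2 \<open>\<le> \<beta>\<close>: the centre pays nothing and a leaf
  paying \<open>\<alpha>\<close> can only drop its link and become isolated, which costs \<open>W - w u \<ge> \<alpha>\<close>.\<close>

lemma is_walk_singleton [simp]: "is_walk E [x]"
  by (simp add: is_walk_def)

lemma is_walk_Cons_Cons [simp]:
  "is_walk E (x # y # xs) \<longleftrightarrow> {x, y} \<in> E \<and> is_walk E (y # xs)"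
  by (auto simp: is_walk_def nth_Cons split: nat.splits)

lemma is_walk_last_mem:
  assumes "is_walk E xs" "hd xs \<in> P" "\<And>x y. {x, y} \<in> E \<Longrightarrow> x \<in> P \<Longrightarrow> y \<in> P"
  shows "last xs \<in> P"
  using assms(1,2)
proof (induction xs rule: induct_list012)
  case (3 x y zs)
  then have "y \<in> P" using assms(3) by auto
  with 3 show ?case by simp
qed (auto simp: is_walk_def)

lemma graph_dist_le_walk:
  assumes "is_walk E xs" "hd xs = u" "last xs = v"
  shows "graph_dist E u v \<le> enat (length xs - 1)"
  unfolding graph_dist_def by (rule INF_lower) (use assms in auto)

lemma graph_dist_self [simp]: "graph_dist E u u = 0"
  using graph_dist_le_walk[of E "[u]" u u] by (simp add: zero_enat_def[symmetric])

lemma graph_dist_finite_imp_walk: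
  assumes "graph_dist E u v \<noteq> \<infinity>"
  obtains xs where "is_walk E xs" "hd xs = u" "last xs = v"
proof -
  have "{xs. is_walk E xs \<and> hd xs = u \<and> last xs = v} \<noteq> {}"
  proof
    assume no_walk: "{xs. is_walk E xs \<and> hd xs = u \<and> last xs = v} = {}"
    show False using assms unfolding graph_dist_def no_walk by (simp add: top_enat_def)
  qed
  then show thesis using that by blast
qed

lemma graph_dist_infinite_outside_closed:
  assumes "u \<in> P" "v \<notin> P" "\<And>x y. {x, y} \<in> E \<Longrightarrow> x \<in> P \<Longrightarrow> y \<in> P"
  shows "graph_dist E u v = \<infinity>"
proof -
  have no_walk: "{xs. is_walk E xs \<and> hd xs = u \<and> last xs = v} = {}"
    using is_walk_last_mem[of E _ P] assms by blast
  show ?thesis unfolding graph_dist_def no_walk by (simp add: top_enat_def)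
qed

lemma graph_dist_le_2_via_centre:
  assumes "u = c \<or> {u, c} \<in> E" "v = c \<or> {c, v} \<in> E"
  shows "graph_dist E u v \<le> 2"
proof -
  obtain xs where "is_walk E xs" "hd xs = u" "last xs = v" "length xs \<le> 3"
    using assms by (elim disjE) (rule that[of "[c]"] that[of "[c, v]"] that[of "[u, c]"]
        that[of "[u, c, v]"]; force)+
  then have "graph_dist E u v \<le> enat (length xs - 1)" "length xs - 1 \<le> 2"
    using graph_dist_le_walk by auto
  then show ?thesis
    by (metis enat_ord_simps(1) numeral_eq_enat order.trans)
qed

lemma funpow_fixed_point: "f x = x \<Longrightarrow> (f ^^ k) x = x"
  by (induction k) auto

lemma funpow_fixed_points_eq:
  assumes "(f ^^ i) b = u" "(f ^^ j) b = v" "f u = u" "f v = v"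
  shows "u = v"
proof -
  have "(f ^^ (j + i)) b = u" using assms(1,3) by (simp add: funpow_add funpow_fixed_point)
  moreover have "(f ^^ (i + j)) b = v" using assms(2,4) by (simp add: funpow_add funpow_fixed_point)
  ultimately show ?thesis by (simp add: add.commute)
qed

lemma walk_ends_meet_under_iteration:
  assumes "\<And>x y. {x, y} \<in> E \<Longrightarrow> x = f y \<or> y = f x" "is_walk E xs"
  shows "\<exists>j k. (f ^^ j) (hd xs) = (f ^^ k) (last xs)"
proof -
  let ?P = "{y. \<exists>j k. (f ^^ j) (hd xs) = (f ^^ k) y}"
  have "y \<in> ?P" if "{x, y} \<in> E" "x \<in> ?P" for x y
  proof -
    obtain j k where jk: "(f ^^ j) (hd xs) = (f ^^ k) x" using \<open>x \<in> ?P\<close> by blast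
    from assms(1)[OF \<open>{x, y} \<in> E\<close>] show ?thesis
    proof
      assume "x = f y"
      then have "(f ^^ j) (hd xs) = (f ^^ Suc k) y" using jk by (simp add: funpow_swap1)
      then show ?thesis by blast
    next
      assume "y = f x"
      then have "(f ^^ (Suc j)) (hd xs) = (f ^^ k) y" using jk by (simp add: funpow_swap1)
      then show ?thesis by blast
    qed
  qed
  moreover have "hd xs \<in> ?P" by auto
  ultimately show ?thesis using is_walk_last_mem[OF assms(2), of ?P] by blast
qed

lemma connected_fixed_points_eq:
  assumes "\<And>x y. {x, y} \<in> E \<Longrightarrow> x = f y \<or> y = f x"
    and "graph_dist E b u \<noteq> \<infinity>" "graph_dist E b v \<noteq> \<infinity>" "f u = u" "f v = v"
  shows "u = v"
proof -
  have "\<exists>j. (f ^^ j) b = x" if "graph_dist E b x \<noteq> \<infinity>" "f x = x" for x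
  proof -
    obtain xs where "is_walk E xs" "hd xs = b" "last xs = x"
      using graph_dist_finite_imp_walk[OF \<open>graph_dist E b x \<noteq> \<infinity>\<close>] .
    then obtain j k where "(f ^^ j) b = (f ^^ k) x"
      using walk_ends_meet_under_iteration[OF assms(1)] by blast
    then show ?thesis using funpow_fixed_point[of f x k] \<open>f x = x\<close> by auto
  qed
  then show ?thesis using assms(2-5) funpow_fixed_points_eq by metis
qed

lemma finite_players [simp]: "finite (players n)"
  by (simp add: players_def)

lemma doubleton_mem_outcome_graph_iff:
  "{x, y} \<in> outcome_graph n S \<longleftrightarrow> x \<in> players n \<and> y \<in> players n \<and> (x \<in> S y \<or> y \<in> S x)"
  unfolding outcome_graph_def by (auto simp: doubleton_eq_iff)

lemma player_cost_ge:
  fixes w :: "nat \<Rightarrow> real" and \<alpha> :: real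
  assumes "\<forall>v\<in>players n. w v > 0" "X \<subseteq> players n"
    and "\<And>x. x \<in> X \<Longrightarrow> graph_dist (outcome_graph n S) u x > enat \<beta>"
  shows "\<alpha> * card (S u) + (\<Sum>x\<in>X. w x) \<le> player_cost n w \<alpha> \<beta> S u"
  unfolding player_cost_def
  by (rule add_left_mono, rule sum_mono2) (use assms in \<open>auto simp: less_imp_le\<close>)

lemma player_cost_ge_link_cost:
  fixes w :: "nat \<Rightarrow> real" and \<alpha> :: real
  assumes "\<forall>v\<in>players n. w v > 0"
  shows "\<alpha> * card (S u) \<le> player_cost n w \<alpha> \<beta> S u"
  using player_cost_ge[OF assms, of "{}"] by simp

lemma player_cost_ge_outside_closed:
  fixes w :: "nat \<Rightarrow> real" and \<alpha> :: real
  assumes "\<forall>v\<in>players n. w v > 0" "u \<in> P"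
    and "\<And>x y. {x, y} \<in> outcome_graph n S \<Longrightarrow> x \<in> P \<Longrightarrow> y \<in> P"
  shows "\<alpha> * card (S u) + (\<Sum>x\<in>players n - P. w x) \<le> player_cost n w \<alpha> \<beta> S u"
  using graph_dist_infinite_outside_closed[of u P _ "outcome_graph n S"] assms
  by (intro player_cost_ge) auto

lemma player_cost_le_without_links:
  fixes w :: "nat \<Rightarrow> real" and \<alpha> :: real
  assumes "\<forall>v\<in>players n. w v > 0" "u \<in> players n" "S u = {}"
  shows "player_cost n w \<alpha> \<beta> S u \<le> (\<Sum>v\<in>players n. w v) - w u"
proof -
  have "player_cost n w \<alpha> \<beta> S u
      = (\<Sum>v\<in>{v \<in> players n. graph_dist (outcome_graph n S) u v > enat \<beta>}. w v)"
    using assms(3) by (simp add: player_cost_def)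
  also have "\<dots> \<le> (\<Sum>v\<in>players n - {u}. w v)"
    using assms(1) graph_dist_self[of "outcome_graph n S" u]
    by (intro sum_mono2) (auto simp: less_imp_le)
  also have "\<dots> = (\<Sum>v\<in>players n. w v) - w u"
    using assms(2) by (simp add: sum_diff1)
  finally show ?thesis .
qed

lemma player_cost_eq_link_cost:
  assumes "\<And>v. v \<in> players n \<Longrightarrow> graph_dist (outcome_graph n S) u v \<le> enat \<beta>"
  shows "player_cost n w \<alpha> \<beta> S u = \<alpha> * card (S u)"
proof -
  have no_far: "{v \<in> players n. graph_dist (outcome_graph n S) u v > enat \<beta>} = {}"
    using assms by (auto simp: not_less[symmetric])
  show ?thesis unfolding player_cost_def no_far by simp
qed

lemma nash_links_finite:
  assumes "nash_equilibrium n w \<alpha> \<beta> S" "u \<in> players n"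
  shows "finite (S u)"
proof -
  have "S u \<subseteq> players n - {u}" using assms by (simp add: nash_equilibrium_def valid_profile_def)
  then show ?thesis by (rule finite_subset) simp
qed

lemma nash_link_cost_le:
  assumes game: "celebrity_game n w \<alpha> \<beta>" and NE: "nash_equilibrium n w \<alpha> \<beta> S"
    and u: "u \<in> players n"
  shows "\<alpha> * card (S u) \<le> (\<Sum>v\<in>players n. w v) - w u"
proof -
  have wpos: "\<forall>v\<in>players n. w v > 0" using game by (simp add: celebrity_game_def)
  have "\<alpha> * card (S u) \<le> player_cost n w \<alpha> \<beta> S u"
    by (rule player_cost_ge_link_cost[OF wpos])
  also have "\<dots> \<le> player_cost n w \<alpha> \<beta> (S(u := {})) u"
    using NE u by (simp add: nash_equilibrium_def)
  also have "\<dots> \<le> (\<Sum>v\<in>players n. w v) - w u"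
    using player_cost_le_without_links[OF wpos u] by simp
  finally show ?thesis .
qed

lemma nash_expensive_player_no_links:
  assumes game: "celebrity_game n w \<alpha> \<beta>" and NE: "nash_equilibrium n w \<alpha> \<beta> S"
    and u: "u \<in> players n" and expensive: "\<alpha> > (\<Sum>v\<in>players n. w v) - w u"
  shows "S u = {}"
proof -
  have "\<alpha> * card (S u) < \<alpha> * 1"
    using nash_link_cost_le[OF game NE u] expensive by simp
  then have "card (S u) = 0" using game by (simp add: celebrity_game_def)
  then show ?thesis using nash_links_finite[OF NE u] by simp
qed

lemma nash_at_most_one_link:
  assumes game: "celebrity_game n w \<alpha> \<beta>" and NE: "nash_equilibrium n w \<alpha> \<beta> S"
    and u1: "u1 \<in> players n" "\<alpha> > (\<Sum>v\<in>players n. w v) - w u1"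
    and u2: "u2 \<in> players n" "\<alpha> > (\<Sum>v\<in>players n. w v) - w u2"
    and "u1 \<noteq> u2" and v: "v \<in> players n"
  shows "card (S v) \<le> 1"
proof -
  have wpos: "\<forall>v\<in>players n. w v > 0" using game by (simp add: celebrity_game_def)
  have "(\<Sum>x\<in>{u1, u2}. w x) \<le> (\<Sum>x\<in>players n. w x)"
    using u1 u2 wpos by (intro sum_mono2) (auto simp: less_imp_le)
  then have "w u1 + w u2 \<le> (\<Sum>x\<in>players n. w x)" using \<open>u1 \<noteq> u2\<close> by simp
  then have "\<alpha> * card (S v) < \<alpha> * 2"
    using nash_link_cost_le[OF game NE v] u1(2) u2(2) wpos v by fastforce
  then show ?thesis using game by (simp add: celebrity_game_def)
qed

lemma nash_buyer_near_expensive: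
  assumes game: "celebrity_game n w \<alpha> \<beta>" and NE: "nash_equilibrium n w \<alpha> \<beta> S"
    and b: "b \<in> players n" "S b \<noteq> {}"
    and u: "u \<in> players n" and expensive: "\<alpha> > (\<Sum>v\<in>players n. w v) - w u"
  shows "graph_dist (outcome_graph n S) b u \<le> enat \<beta>"
proof (rule ccontr)
  assume "\<not> ?thesis"
  then have far: "graph_dist (outcome_graph n S) b u > enat \<beta>" by simp
  have wpos: "\<forall>v\<in>players n. w v > 0" and "\<alpha> > 0" using game by (auto simp: celebrity_game_def)
  have "card (S b) \<ge> 1" using b nash_links_finite[OF NE b(1)] by (simp add: Suc_le_eq card_gt_0_iff)
  then have "\<alpha> + w u \<le> \<alpha> * card (S b) + w u" using \<open>\<alpha> > 0\<close> by simp
  also have "\<dots> \<le> player_cost n w \<alpha> \<beta> S b"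
    using player_cost_ge[OF wpos, of "{u}"] u far by simp
  also have "\<dots> \<le> player_cost n w \<alpha> \<beta> (S(b := {})) b"
    using NE b by (simp add: nash_equilibrium_def)
  also have "\<dots> \<le> (\<Sum>v\<in>players n. w v) - w b"
    using player_cost_le_without_links[OF wpos b(1)] by simp
  finally show False using expensive wpos b(1) by fastforce
qed

lemma nash_edgeless_if_two_expensive:
  assumes game: "celebrity_game n w \<alpha> \<beta>" and NE: "nash_equilibrium n w \<alpha> \<beta> S"
    and u1: "u1 \<in> players n" "\<alpha> > (\<Sum>v\<in>players n. w v) - w u1"
    and u2: "u2 \<in> players n" "\<alpha> > (\<Sum>v\<in>players n. w v) - w u2"
    and "u1 \<noteq> u2"
  shows "outcome_graph n S = {}"
proof (rule ccontr)
  assume "outcome_graph n S \<noteq> {}"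
  then obtain e where "e \<in> outcome_graph n S" by blast
  then have "\<exists>x y. x \<in> players n \<and> y \<in> players n \<and> (x \<in> S y \<or> y \<in> S x)"
    unfolding outcome_graph_def by blast
  then obtain b where b: "b \<in> players n" "S b \<noteq> {}" by blast
  define f where "f x = (if S x = {} then x else the_elem (S x))" for x
  have link: "f x = a" if "x \<in> players n" "a \<in> S x" for x a
  proof -
    have "card (S x) \<le> 1" using nash_at_most_one_link[OF game NE u1 u2 \<open>u1 \<noteq> u2\<close> that(1)] .
    then have "S x = {a}"
      using that nash_links_finite[OF NE that(1)] by (auto simp: card_le_Suc0_iff_eq)
    then show ?thesis by (simp add: f_def)
  qed
  have edge: "x = f y \<or> y = f x" if "{x, y} \<in> outcome_graph n S" for x y
    using that link[of y x] link[of x y] unfolding doubleton_mem_outcome_graph_iff by argo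
  have fixed: "f u1 = u1" "f u2 = u2"
    using nash_expensive_player_no_links[OF game NE u1] nash_expensive_player_no_links[OF game NE u2]
    by (simp_all add: f_def)
  have near: "graph_dist (outcome_graph n S) b u \<noteq> \<infinity>"
    if "u \<in> players n" "\<alpha> > (\<Sum>v\<in>players n. w v) - w u" for u
    using nash_buyer_near_expensive[OF game NE b that] by (metis infinity_ileE)
  have "u1 = u2" using connected_fixed_points_eq[OF edge near[OF u1] near[OF u2] fixed] .
  with \<open>u1 \<noteq> u2\<close> show False ..
qed

lemma NE_graph_edgeless:
  assumes game: "celebrity_game n w \<alpha> \<beta>" and alpha_ge: "\<alpha> \<ge> Max (w ` players n)"
  shows "NE_graph n w \<alpha> \<beta> edgeless_graph"
proof -
  let ?S = "\<lambda>_. {} :: nat set"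
  have wpos: "\<forall>v\<in>players n. w v > 0" using game by (simp add: celebrity_game_def)
  have "player_cost n w \<alpha> \<beta> ?S u \<le> player_cost n w \<alpha> \<beta> (?S(u := T)) u"
    if u: "u \<in> players n" and T: "T \<subseteq> players n - {u}" for u T
  proof -
    have "w v \<le> \<alpha>" if "v \<in> T" for v
    proof -
      have "w v \<le> Max (w ` players n)" using T that by (intro Max_ge) auto
      then show ?thesis using alpha_ge by simp
    qed
    then have links: "(\<Sum>v\<in>T. w v) \<le> \<alpha> * card T"
      using sum_bounded_above[of T w \<alpha>] by (simp add: mult.commute)
    have "player_cost n w \<alpha> \<beta> ?S u \<le> (\<Sum>v\<in>players n. w v) - w u"
      using player_cost_le_without_links[OF wpos u, of ?S] by simp
    also have "\<dots> = (\<Sum>v\<in>players n - {u}. w v)"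
      using u by (simp add: sum_diff1)
    also have "\<dots> = (\<Sum>v\<in>T. w v) + (\<Sum>v\<in>players n - insert u T. w v)"
    proof -
      have "players n - {u} = T \<union> (players n - insert u T)" using T by auto
      moreover have "finite T" using T by (rule finite_subset) simp
      moreover have "T \<inter> (players n - insert u T) = {}" by blast
      ultimately show ?thesis using sum.union_disjoint[of T "players n - insert u T" w] by simp
    qed
    also have "\<dots> \<le> \<alpha> * card T + (\<Sum>v\<in>players n - insert u T. w v)"
      using links by simp
    also have "\<dots> \<le> player_cost n w \<alpha> \<beta> (?S(u := T)) u"
    proof -
      have "y \<in> insert u T" if "{x, y} \<in> outcome_graph n (?S(u := T))" "x \<in> insert u T" for x y
        using that unfolding doubleton_mem_outcome_graph_iff by (auto split: if_splits)
      then have "\<alpha> * card ((?S(u := T)) u) + (\<Sum>v\<in>players n - insert u T. w v)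
          \<le> player_cost n w \<alpha> \<beta> (?S(u := T)) u"
        by (rule player_cost_ge_outside_closed[OF wpos insertI1])
      then show ?thesis by simp
    qed
    finally show ?thesis .
  qed
  then have "nash_equilibrium n w \<alpha> \<beta> ?S"
    by (simp add: nash_equilibrium_def valid_profile_def)
  moreover have "outcome_graph n ?S = edgeless_graph"
    by (simp add: outcome_graph_def edgeless_graph_def)
  ultimately show ?thesis unfolding NE_graph_def by metis
qed

lemma NE_graph_star:
  assumes game: "celebrity_game n w \<alpha> \<beta>" and beta_gt: "\<beta> > 1" and c: "c \<in> players n"
    and cheap: "\<And>v. v \<in> players n \<Longrightarrow> v \<noteq> c \<Longrightarrow> \<alpha> \<le> (\<Sum>x\<in>players n. w x) - w v"
  shows "NE_graph n w \<alpha> \<beta> {{c, v} | v. v \<in> players n \<and> v \<noteq> c}"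
proof -
  define S where "S v = (if v \<in> players n \<and> v \<noteq> c then {c} else {})" for v
  have wpos: "\<forall>v\<in>players n. w v > 0" and "\<alpha> > 0" using game by (auto simp: celebrity_game_def)
  have star: "outcome_graph n S = {{c, v} | v. v \<in> players n \<and> v \<noteq> c}"
    unfolding outcome_graph_def S_def using c by (auto split: if_splits)
  have "graph_dist (outcome_graph n S) u v \<le> enat \<beta>" if "u \<in> players n" "v \<in> players n" for u v
  proof -
    have "graph_dist (outcome_graph n S) u v \<le> 2"
      using that by (intro graph_dist_le_2_via_centre[of _ c]) (auto simp: star insert_commute)
    also have "\<dots> \<le> enat \<beta>" using beta_gt by (simp add: numeral_eq_enat)
    finally show ?thesis .
  qed
  then have cost: "player_cost n w \<alpha> \<beta> S u = \<alpha> * card (S u)" if "u \<in> players n" for u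
    using that by (intro player_cost_eq_link_cost)
  have "player_cost n w \<alpha> \<beta> S u \<le> player_cost n w \<alpha> \<beta> (S(u := T)) u"
    if u: "u \<in> players n" and T: "T \<subseteq> players n - {u}" for u T
  proof (cases "u = c \<or> T \<noteq> {}")
    case True
    have "finite T" using T by (rule finite_subset) simp
    then have "card (S u) \<le> card T"
      using True by (auto simp: S_def Suc_le_eq card_gt_0_iff)
    then have "\<alpha> * card (S u) \<le> \<alpha> * card T"
      using \<open>\<alpha> > 0\<close> by simp
    also have "\<dots> \<le> player_cost n w \<alpha> \<beta> (S(u := T)) u"
      using player_cost_ge_link_cost[OF wpos, of \<alpha> "S(u := T)" u \<beta>] by simp
    finally show ?thesis using cost[OF u] by simp
  next
    case False
    then have "player_cost n w \<alpha> \<beta> S u = \<alpha>" using cost[OF u] u by (simp add: S_def)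
    also have "\<dots> \<le> (\<Sum>x\<in>players n - {u}. w x)"
      using cheap[OF u] False u by (simp add: sum_diff1)
    also have "\<dots> \<le> player_cost n w \<alpha> \<beta> (S(u := T)) u"
    proof -
      have "y \<in> {u}" if "{x, y} \<in> outcome_graph n (S(u := T))" "x \<in> {u}" for x y
        using that False unfolding doubleton_mem_outcome_graph_iff by (auto simp: S_def split: if_splits)
      then have "\<alpha> * card ((S(u := T)) u) + (\<Sum>v\<in>players n - {u}. w v)
          \<le> player_cost n w \<alpha> \<beta> (S(u := T)) u"
        by (rule player_cost_ge_outside_closed[OF wpos singletonI])
      then show ?thesis using False by simp
    qed
    finally show ?thesis .
  qed
  then have "nash_equilibrium n w \<alpha> \<beta> S"
    using c by (auto simp: nash_equilibrium_def valid_profile_def S_def)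
  then show ?thesis using star unfolding NE_graph_def by metis
qed

theorem proposition5:
  fixes n :: nat and w :: "nat \<Rightarrow> real" and \<alpha> :: real and \<beta> :: nat
  assumes game: "celebrity_game n w \<alpha> \<beta>"
    and beta_gt: "\<beta> > 1"
    and alpha_ge: "\<alpha> \<ge> Max (w ` players n)"
  shows "(card {u \<in> players n. \<alpha> > (\<Sum>v\<in>players n. w v) - w u} > 1 \<longrightarrow>
            NE_graph n w \<alpha> \<beta> edgeless_graph \<and>
            (\<forall>G. NE_graph n w \<alpha> \<beta> G \<longrightarrow> G = edgeless_graph))
       \<and> (\<not> card {u \<in> players n. \<alpha> > (\<Sum>v\<in>players n. w v) - w u} > 1 \<longrightarrow>
            (\<exists>G. is_star_graph n G \<and> NE_graph n w \<alpha> \<beta> G))"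
proof -
  define A where "A = {u \<in> players n. \<alpha> > (\<Sum>v\<in>players n. w v) - w u}"
  have "finite A" by (simp add: A_def)
  have unique: "G = edgeless_graph" if two: "card A > 1" and NE: "NE_graph n w \<alpha> \<beta> G" for G
  proof -
    obtain u1 u2 S where "u1 \<in> A" "u2 \<in> A" "u1 \<noteq> u2" "nash_equilibrium n w \<alpha> \<beta> S"
        and "G = outcome_graph n S"
      using two NE \<open>finite A\<close> unfolding NE_graph_def
      by (auto simp: card_le_Suc0_iff_eq not_le[symmetric])
    then show ?thesis
      using nash_edgeless_if_two_expensive[OF game] unfolding A_def edgeless_graph_def by blast
  qed
  have star: "\<exists>G. is_star_graph n G \<and> NE_graph n w \<alpha> \<beta> G" if "\<not> card A > 1"
  proof -
    have A_trivial: "\<forall>a\<in>A. \<forall>b\<in>A. a = b"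
      using that card_le_Suc0_iff_eq[OF \<open>finite A\<close>] by (simp add: not_less)
    have "1 \<in> players n" using game beta_gt by (auto simp: celebrity_game_def players_def)
    then obtain c where c: "c \<in> players n" and "A \<subseteq> {c}"
      using A_trivial by (cases "A = {}") (auto simp: A_def)
    then have "NE_graph n w \<alpha> \<beta> {{c, v} | v. v \<in> players n \<and> v \<noteq> c}"
      by (intro NE_graph_star[OF game beta_gt]) (auto simp: A_def not_less)
    then show ?thesis using c unfolding is_star_graph_def by blast
  qed
  show ?thesis
    unfolding A_def[symmetric] using NE_graph_edgeless[OF game alpha_ge] unique star by blast
qed

end
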